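(* Let $m\in\mathbb R$ be the unique minimizing point of $M$ and assume the boundedness condition (B) holds. Then $\hat m_n\to m$ $\mathbb P$-$r$-quickly for every $r>0$, i.e. for every $\epsilon>0$ and $r>0$, $\mathbb E[L_\epsilon^r]<\infty$, where $L_\epsilon:=\sup\{k\in\mathbb N:|\hat m_k-m|>\epsilon\}$ (with $L_\epsilon:=0$ if this set is empty and $L_\epsilon:=\infty$ if it is unbounded).
   Context: Let $(S,\mathcal S,Q)$ be a probability space and $h:S\times\mathbb R\to\mathbb R$ such that $h(\cdot,t)$ is $\mathcal S$-measurable for every $t\in\mathbb R$ and $h(x,\cdot)$ is convex for every $x\in S$. For $f:\mathbb R\to\mathbb R$ convex, $D^+f$ and $D^-f$ denote its right and left derivatives; $D^\pm h(x,t)$ denotes the one-sided derivatives of $h(x,\cdot)$ at $t$. Assume $\int_S|D^+h(x,t)|\,Q(dx)<\infty$ and $\int_S|D^-h(x,t)|\,Q(dx)<\infty$ for all $t\in\mathbb R$. Fix $t_0\in\mathbb R$ and set $M(t):=\int_S (h(x,t)-h(x,t_0))\,Q(dx)$; $M$ is real-valued and convex with $D^\pm M(t)=\int_S D^\pm h(x,t)\,Q(dx)$. Let $X_1,X_2,\dots$ be i.i.d. $S$-valued random variables on a probability space $(\Omega,\mathcal A,\mathbb P)$ with common law $Q$, let $M_n(t):=\frac1n\sum_{i=1}^n (h(X_i,t)-h(X_i,t_0))$, and let $\hat m_n$ be the smallest minimizing point of $M_n$ (assumed to exist; it is a random variable). Boundedness condition (B): for every $x\neq 0$ there are reals $a(x)<b(x)$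 with $a(x)\le D^+h(X_1,m+x)\le b(x)$ almost surely. *)

theory Defs
  imports "HOL-Probability.Probability"
begin

definition Dplus :: "(real \<Rightarrow> real) \<Rightarrow> real \<Rightarrow> real" where
  "Dplus f t = Lim (at_right t) (\<lambda>s. (f s - f t) / (s - t))"

definition Dminus :: "(real \<Rightarrow> real) \<Rightarrow> real \<Rightarrow> real" where
  "Dminus f t = Lim (at_left t) (\<lambda>s. (f s - f t) / (s - t))"

definition Mpop :: "'s measure \<Rightarrow> ('s \<Rightarrow> real \<Rightarrow> real) \<Rightarrow> real \<Rightarrow> real \<Rightarrow> real" where
  "Mpop Q h t0 t = (\<integral>x. h x t - h x t0 \<partial>Q)"

definition Memp :: "('s \<Rightarrow> real \<Rightarrow> real) \<Rightarrow> real \<Rightarrow> (nat \<Rightarrow> 'w \<Rightarrow> 's) \<Rightarrow> nat \<Rightarrow> 'w \<Rightarrow> real \<Rightarrow> real" where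
  "Memp h t0 X n \<omega> t = (1 / real n) * (\<Sum>i<n. h (X i \<omega>) t - h (X i \<omega>) t0)"

definition smallest_minimizer :: "(real \<Rightarrow> real) \<Rightarrow> real \<Rightarrow> bool" where
  "smallest_minimizer f y \<longleftrightarrow> (\<forall>t. f y \<le> f t) \<and> (\<forall>z. (\<forall>t. f z \<le> f t) \<longrightarrow> y \<le> z)"

text \<open>L_eps = sup {k. |mhat_k - m| > eps}, in enat (Sup {} = 0, unbounded = infinity).\<close>
definition last_exit :: "(nat \<Rightarrow> real) \<Rightarrow> real \<Rightarrow> real \<Rightarrow> enat" where
  "last_exit mh m \<epsilon> = Sup {enat k | k. k \<ge> 1 \<and> \<bar>mh k - m\<bar> > \<epsilon>}"

definition enat_powr :: "enat \<Rightarrow> real \<Rightarrow> ennreal" where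
  "enat_powr L r = (case L of enat k \<Rightarrow> ennreal (real k powr r) | \<infinity> \<Rightarrow> \<infinity>)"

end

theory Submission
  imports Defs "HOL-Real_Asymp.Real_Asymp"
begin

text \<open>If \<open>mhat n > m + \<epsilon>\<close>, convexity forces the right derivative of the empirical criterion at
  \<open>m + \<epsilon>\<close> to be \<open>\<le> 0\<close>: a sum of \<open>n\<close> i.i.d. bounded variables \<open>D\<^sup>+h(X\<^sub>i, m + \<epsilon>)\<close>
  is nonpositive although their mean \<open>D\<^sup>+M(m + \<epsilon>)\<close> is positive, \<open>m\<close> being the unique
  minimizer of \<open>M\<close>; symmetrically at \<open>m - \<epsilon>\<close>. Hoeffding's inequality bounds both
  probabilities by \<open>exp (- c n)\<close>, hence \<open>E[L\<^sub>\<epsilon>\<^sup>r] \<le> \<Sum>n. n\<^sup>r P(\<bar>mhat n - m\<bar> > \<epsilon>) < \<infinity>\<close>.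
  Only right derivatives enter.\<close>

lemma convex_slope_mono:
  fixes f :: "real \<Rightarrow> real"
  assumes f: "convex_on UNIV f" and "x < y" "y < z"
  shows "(f y - f x) / (y - x) \<le> (f z - f y) / (z - y)"
proof -
  have "(f x - f y) / (x - y) \<le> (f x - f z) / (x - z)"
       "(f x - f z) / (x - z) \<le> (f y - f z) / (y - z)"
    using convex_on_slope_le[OF f _ _ assms(2,3)] by auto
  then show ?thesis by (smt (verit) minus_divide_divide)
qed

lemma convex_slope_mono_right:
  fixes f :: "real \<Rightarrow> real"
  assumes f: "convex_on UNIV f" and "t < u" "u \<le> v"
  shows "(f u - f t) / (u - t) \<le> (f v - f t) / (v - t)"
proof (cases "u = v")
  case False
  then have "u < v" using assms by simp
  have "(f t - f u) / (t - u) \<le> (f t - f v) / (t - v)"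
    using convex_on_slope_le(1)[OF f _ _ assms(2) \<open>u < v\<close>] by auto
  then show ?thesis by (smt (verit) minus_divide_divide)
qed simp

lemma bdd_below_convex_slopes_right:
  fixes f :: "real \<Rightarrow> real"
  assumes f: "convex_on UNIV f"
  shows "bdd_below ((\<lambda>s. (f s - f t) / (s - t)) ` {t<..})"
  unfolding bdd_below_def
  using convex_slope_mono[OF f, of "t - 1" t] by (intro exI[of _ "f t - f (t - 1)"]) auto

text \<open>The right difference quotients of a convex function decrease as \<open>s \<down> t\<close>.\<close>

lemma Dplus_convex_eq_Inf:
  fixes f :: "real \<Rightarrow> real"
  assumes f: "convex_on UNIV f"
  shows "Dplus f t = Inf ((\<lambda>s. (f s - f t) / (s - t)) ` {t<..})"
proof -
  define q where "q = (\<lambda>s. (f s - f t) / (s - t))"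
  have bdd: "bdd_below (q ` {t<..})"
    unfolding q_def by (rule bdd_below_convex_slopes_right[OF f])
  have "(q \<longlongrightarrow> Inf (q ` {t<..})) (at_right t)"
  proof (rule order_tendstoI)
    fix y assume "y < Inf (q ` {t<..})"
    then have "\<forall>s. t < s \<and> s < t + 1 \<longrightarrow> y < q s"
      using cInf_lower[OF _ bdd] by (smt (verit) greaterThan_iff image_eqI)
    then show "eventually (\<lambda>s. y < q s) (at_right t)"
      by (subst eventually_at_right[of t "t + 1"]) (auto intro!: exI[of _ "t + 1"])
  next
    fix y assume "Inf (q ` {t<..}) < y"
    then obtain u where u: "t < u" "q u < y" using cInf_lessD[of "q ` {t<..}"] by auto
    then have "\<forall>s. t < s \<and> s < u \<longrightarrow> q s < y"
      using convex_slope_mono_right[OF f] unfolding q_def by (smt (verit))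
    then show "eventually (\<lambda>s. q s < y) (at_right t)"
      unfolding eventually_at_right[OF u(1)] using u(1) by blast
  qed
  then show ?thesis unfolding Dplus_def q_def[symmetric] by (rule tendsto_Lim[rotated]) simp
qed

lemma Dplus_le_slope:
  fixes f :: "real \<Rightarrow> real"
  assumes f: "convex_on UNIV f" and "t < s"
  shows "Dplus f t \<le> (f s - f t) / (s - t)"
  unfolding Dplus_convex_eq_Inf[OF f] using assms
  by (intro cInf_lower bdd_below_convex_slopes_right) auto

lemma slope_le_Dplus:
  fixes f :: "real \<Rightarrow> real"
  assumes f: "convex_on UNIV f" and "s < t"
  shows "(f t - f s) / (t - s) \<le> Dplus f t"
  unfolding Dplus_convex_eq_Inf[OF f] using assms
  by (intro cInf_greatest) (auto intro!: convex_slope_mono[OF f])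

lemma convex_diff_Dplus_bounds:
  fixes f :: "real \<Rightarrow> real"
  assumes f: "convex_on UNIV f" and "a < b"
  shows "(b - a) * Dplus f a \<le> f b - f a" "f b - f a \<le> (b - a) * Dplus f b"
  using Dplus_le_slope[OF f assms(2)] slope_le_Dplus[OF f assms(2)] assms(2)
  by (simp_all add: field_simps)

lemma integrable_diff_of_integrable_Dplus:
  fixes Q :: "'s measure" and h :: "'s \<Rightarrow> real \<Rightarrow> real"
  assumes h_meas: "\<And>t. (\<lambda>x. h x t) \<in> borel_measurable Q"
    and h_conv: "\<And>x. x \<in> space Q \<Longrightarrow> convex_on UNIV (h x)"
    and Dplus_int: "\<And>t. integrable Q (\<lambda>x. Dplus (h x) t)"
  shows "integrable Q (\<lambda>x. h x b - h x a)"
proof -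
  have "integrable Q (\<lambda>x. h x v - h x u)" if "u < v" for u v
  proof (rule Bochner_Integration.integrable_bound)
    show "integrable Q (\<lambda>x. (v - u) * (\<bar>Dplus (h x) u\<bar> + \<bar>Dplus (h x) v\<bar>))"
      using Dplus_int by auto
    show "AE x in Q. norm (h x v - h x u) \<le> norm ((v - u) * (\<bar>Dplus (h x) u\<bar> + \<bar>Dplus (h x) v\<bar>))"
    proof (rule AE_I2)
      fix x assume "x \<in> space Q"
      note bounds = convex_diff_Dplus_bounds[OF h_conv[OF this] that]
      have "\<bar>(v - u) * Dplus (h x) w\<bar> = (v - u) * \<bar>Dplus (h x) w\<bar>" for w
        using that by (simp add: abs_mult)
      then show "norm (h x v - h x u)
          \<le> norm ((v - u) * (\<bar>Dplus (h x) u\<bar> + \<bar>Dplus (h x) v\<bar>))"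
        using bounds that abs_ge_self[of "(v - u) * Dplus (h x) v"]
          abs_ge_minus_self[of "(v - u) * Dplus (h x) u"]
        by (simp add: distrib_left abs_le_iff) (smt (verit))
    qed
  qed (use h_meas in auto)
  from this[of a b] this[of b a] show ?thesis
    by (cases a b rule: linorder_cases) (auto dest: integrable_minus)
qed

lemma Mpop_diff_Dplus_bounds:
  fixes Q :: "'s measure" and h :: "'s \<Rightarrow> real \<Rightarrow> real"
  assumes h_meas: "\<And>t. (\<lambda>x. h x t) \<in> borel_measurable Q"
    and h_conv: "\<And>x. x \<in> space Q \<Longrightarrow> convex_on UNIV (h x)"
    and Dplus_int: "\<And>t. integrable Q (\<lambda>x. Dplus (h x) t)"
    and ab: "a < b"
  shows "(b - a) * (\<integral>x. Dplus (h x) a \<partial>Q) \<le> Mpop Q h t0 b - Mpop Q h t0 a"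
    and "Mpop Q h t0 b - Mpop Q h t0 a \<le> (b - a) * (\<integral>x. Dplus (h x) b \<partial>Q)"
proof -
  note int_diff = integrable_diff_of_integrable_Dplus[OF h_meas h_conv Dplus_int]
  have eq: "Mpop Q h t0 b - Mpop Q h t0 a = (\<integral>x. h x b - h x a \<partial>Q)"
    unfolding Mpop_def using int_diff[of b t0] int_diff[of a t0]
    by (subst Bochner_Integration.integral_diff[symmetric]) auto
  show "(b - a) * (\<integral>x. Dplus (h x) a \<partial>Q) \<le> Mpop Q h t0 b - Mpop Q h t0 a"
    unfolding eq
    by (subst integral_mult_right_zero[symmetric], rule integral_mono_AE)
       (use int_diff Dplus_int convex_diff_Dplus_bounds(1)[OF h_conv ab] in auto)
  show "Mpop Q h t0 b - Mpop Q h t0 a \<le> (b - a) * (\<integral>x. Dplus (h x) b \<partial>Q)"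
    unfolding eq
    by (subst integral_mult_right_zero[symmetric], rule integral_mono_AE)
       (use int_diff Dplus_int convex_diff_Dplus_bounds(2)[OF h_conv ab] in auto)
qed

lemma integral_Dplus_sign_at_strict_minimizer:
  fixes Q :: "'s measure" and h :: "'s \<Rightarrow> real \<Rightarrow> real"
  assumes h_meas: "\<And>t. (\<lambda>x. h x t) \<in> borel_measurable Q"
    and h_conv: "\<And>x. x \<in> space Q \<Longrightarrow> convex_on UNIV (h x)"
    and Dplus_int: "\<And>t. integrable Q (\<lambda>x. Dplus (h x) t)"
    and m_unique: "\<And>t. t \<noteq> m \<Longrightarrow> Mpop Q h t0 m < Mpop Q h t0 t"
  shows "m < t \<Longrightarrow> 0 < (\<integral>x. Dplus (h x) t \<partial>Q)"
    and "t < m \<Longrightarrow> (\<integral>x. Dplus (h x) t \<partial>Q) < 0"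
proof -
  show "0 < (\<integral>x. Dplus (h x) t \<partial>Q)" if "m < t"
    using Mpop_diff_Dplus_bounds(2)[OF h_meas h_conv Dplus_int that] m_unique[of t] that by (smt (verit) zero_less_mult_iff)
  show "(\<integral>x. Dplus (h x) t \<partial>Q) < 0" if "t < m"
    using Mpop_diff_Dplus_bounds(1)[OF h_meas h_conv Dplus_int that] m_unique[of t] that by (smt (verit) mult_less_0_iff)
qed

lemma minimizer_far_imp_Dplus_sum_sign:
  fixes g :: "nat \<Rightarrow> real \<Rightarrow> real"
  assumes conv: "\<And>i. i < n \<Longrightarrow> convex_on UNIV (g i)"
    and ymin: "\<And>t. (\<Sum>i<n. g i y) \<le> (\<Sum>i<n. g i t)"
    and far: "\<epsilon> < \<bar>y - m\<bar>"
  shows "(\<Sum>i<n. Dplus (g i) (m + \<epsilon>)) \<le> 0 \<or> 0 \<le> (\<Sum>i<n. Dplus (g i) (m - \<epsilon>))"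
proof (cases "m + \<epsilon> < y")
  case True
  have "(\<Sum>i<n. Dplus (g i) (m + \<epsilon>)) \<le> (\<Sum>i<n. (g i y - g i (m + \<epsilon>)) / (y - (m + \<epsilon>)))"
    by (intro sum_mono Dplus_le_slope conv True) auto
  also have "\<dots> = ((\<Sum>i<n. g i y) - (\<Sum>i<n. g i (m + \<epsilon>))) / (y - (m + \<epsilon>))"
    by (simp add: sum_subtractf flip: sum_divide_distrib)
  also have "\<dots> \<le> 0" using ymin[of "m + \<epsilon>"] True by (intro divide_nonpos_pos) auto
  finally show ?thesis by simp
next
  case False
  then have y: "y < m - \<epsilon>" using far by auto
  have "0 \<le> ((\<Sum>i<n. g i (m - \<epsilon>)) - (\<Sum>i<n. g i y)) / ((m - \<epsilon>) - y)"
    using ymin[of "m - \<epsilon>"] y by (intro divide_nonneg_pos) auto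
  also have "\<dots> = (\<Sum>i<n. (g i (m - \<epsilon>) - g i y) / ((m - \<epsilon>) - y))"
    by (simp add: sum_subtractf flip: sum_divide_distrib)
  also have "\<dots> \<le> (\<Sum>i<n. Dplus (g i) (m - \<epsilon>))"
    by (intro sum_mono slope_le_Dplus conv y) auto
  finally show ?thesis by simp
qed

lemma smallest_minimizer_Memp_imp_minimizer_sum:
  assumes "smallest_minimizer (Memp h t0 X n \<omega>) y" and "n \<ge> 1"
  shows "(\<Sum>i<n. h (X i \<omega>) y) \<le> (\<Sum>i<n. h (X i \<omega>) t)"
proof -
  have "Memp h t0 X n \<omega> y \<le> Memp h t0 X n \<omega> t"
    using assms(1) unfolding smallest_minimizer_def by blast
  then have "(\<Sum>i<n. h (X i \<omega>) y - h (X i \<omega>) t0) \<le> (\<Sum>i<n. h (X i \<omega>) t - h (X i \<omega>) t0)"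
    unfolding Memp_def using assms(2) by (simp add: divide_le_cancel)
  then show ?thesis by (simp add: sum_subtractf)
qed

lemma iid_sum_nonpos_prob_le:
  fixes P :: "'w measure" and Q :: "'s measure" and X :: "nat \<Rightarrow> 'w \<Rightarrow> 's" and g :: "'s \<Rightarrow> real"
  assumes P: "prob_space P"
    and X_meas: "\<And>i. X i \<in> measurable P Q"
    and X_indep: "prob_space.indep_vars P (\<lambda>_. Q) X UNIV"
    and X_law: "\<And>i. distr P Q (X i) = Q"
    and g: "g \<in> borel_measurable Q"
    and bounded: "AE \<omega> in P. a \<le> g (X 0 \<omega>) \<and> g (X 0 \<omega>) \<le> b" and "a < b"
    and mean_pos: "0 < (\<integral>x. g x \<partial>Q)" and "n \<ge> 1"
  shows "measure P {\<omega>\<in>space P. (\<Sum>i<n. g (X i \<omega>)) \<le> 0}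
           \<le> exp (- 2 * real n * (\<integral>x. g x \<partial>Q)\<^sup>2 / (b - a)\<^sup>2)"
proof -
  interpret prob_space P by (rule P)
  have gX: "(\<lambda>\<omega>. g (X i \<omega>)) \<in> borel_measurable P" for i
    using measurable_comp[OF X_meas g] by (simp add: comp_def)
  have law: "distr P borel (\<lambda>\<omega>. g (X i \<omega>)) = distr Q borel g" for i
    using distr_distr[OF g X_meas[of i]] X_law by (simp add: comp_def)
  have mean: "expectation (\<lambda>\<omega>. g (X 0 \<omega>)) = (\<integral>x. g x \<partial>Q)"
    using integral_distr[OF X_meas[of 0] g] X_law by simp
  interpret Hoeffding_ineq_iid P "{..<n}" "\<lambda>i \<omega>. g (X i \<omega>)" "\<lambda>\<omega>. g (X 0 \<omega>)" a b
    "expectation (\<lambda>\<omega>. g (X 0 \<omega>))"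
  proof unfold_locales
    show "indep_vars (\<lambda>_. borel) (\<lambda>i \<omega>. g (X i \<omega>)) {..<n}"
      by (rule indep_vars_subset[OF indep_vars_compose2[OF X_indep, of "\<lambda>_. g"]]) (use g in auto)
  qed (use bounded in \<open>auto simp: law gX\<close>)
  have "prob {\<omega>\<in>space P. (\<Sum>i<n. g (X i \<omega>)) \<le> 0}
      \<le> exp (- 2 * (real n * (\<integral>x. g x \<partial>Q))\<^sup>2 / (real n * (b - a)\<^sup>2))"
    using Hoeffding_ineq_le[of "real n * (\<integral>x. g x \<partial>Q)"] \<open>a < b\<close> \<open>n \<ge> 1\<close> mean_pos
    by (simp add: mean lessThan_empty_iff)
  also have "\<dots> = exp (- 2 * real n * (\<integral>x. g x \<partial>Q)\<^sup>2 / (b - a)\<^sup>2)"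
    using \<open>n \<ge> 1\<close> by (simp add: power2_eq_square)
  finally show ?thesis .
qed

lemma iid_sum_nonpos_prob_exp_decay:
  fixes P :: "'w measure" and Q :: "'s measure" and X :: "nat \<Rightarrow> 'w \<Rightarrow> 's" and g :: "'s \<Rightarrow> real"
  assumes P: "prob_space P"
    and X_meas: "\<And>i. X i \<in> measurable P Q"
    and X_indep: "prob_space.indep_vars P (\<lambda>_. Q) X UNIV"
    and X_law: "\<And>i. distr P Q (X i) = Q"
    and g: "g \<in> borel_measurable Q"
    and bounded: "\<exists>a b. a < b \<and> (AE \<omega> in P. a \<le> g (X 0 \<omega>) \<and> g (X 0 \<omega>) \<le> b)"
    and mean_pos: "0 < (\<integral>x. g x \<partial>Q)"
  shows "\<exists>c>0. \<forall>n\<ge>1. measure P {\<omega>\<in>space P. (\<Sum>i<n. g (X i \<omega>)) \<le> 0} \<le> exp (- c * real n)"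
proof -
  obtain a b where ab: "a < b" "AE \<omega> in P. a \<le> g (X 0 \<omega>) \<and> g (X 0 \<omega>) \<le> b"
    using bounded by blast
  show ?thesis
  proof (intro exI conjI allI impI)
    show "0 < 2 * (\<integral>x. g x \<partial>Q)\<^sup>2 / (b - a)\<^sup>2" using mean_pos ab(1) by simp
    fix n :: nat assume "n \<ge> 1"
    with iid_sum_nonpos_prob_le[OF P X_meas X_indep X_law g ab(2) ab(1) mean_pos]
    show "measure P {\<omega>\<in>space P. (\<Sum>i<n. g (X i \<omega>)) \<le> 0}
          \<le> exp (- (2 * (\<integral>x. g x \<partial>Q)\<^sup>2 / (b - a)\<^sup>2) * real n)"
      by (simp add: field_simps)
  qed
qed

lemma prob_smallest_minimizer_far_le:
  fixes Q :: "'s measure" and P :: "'w measure"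
    and h :: "'s \<Rightarrow> real \<Rightarrow> real" and X :: "nat \<Rightarrow> 'w \<Rightarrow> 's" and mhat :: "nat \<Rightarrow> 'w \<Rightarrow> real"
  assumes h_conv: "\<And>x. x \<in> space Q \<Longrightarrow> convex_on UNIV (h x)"
    and Dplus_meas: "\<And>t. (\<lambda>x. Dplus (h x) t) \<in> borel_measurable Q"
    and P: "prob_space P"
    and X_meas: "\<And>i. X i \<in> measurable P Q"
    and mhat_min: "\<And>\<omega>. \<omega> \<in> space P \<Longrightarrow> smallest_minimizer (Memp h t0 X n \<omega>) (mhat n \<omega>)"
    and n: "n \<ge> 1"
  shows "measure P {\<omega>\<in>space P. \<epsilon> < \<bar>mhat n \<omega> - m\<bar>}
    \<le> measure P {\<omega>\<in>space P. (\<Sum>i<n. Dplus (h (X i \<omega>)) (m + \<epsilon>)) \<le> 0}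
      + measure P {\<omega>\<in>space P. (\<Sum>i<n. - Dplus (h (X i \<omega>)) (m - \<epsilon>)) \<le> 0}"
    (is "_ \<le> measure P ?Sp + measure P ?Sm")
proof -
  interpret P: prob_space P by (rule P)
  have sum_meas: "(\<lambda>\<omega>. \<Sum>i<n. g (X i \<omega>)) \<in> borel_measurable P"
    if "g \<in> borel_measurable Q" for g :: "'s \<Rightarrow> real"
    using measurable_comp[OF X_meas that]
    by (intro borel_measurable_sum[where f = "\<lambda>i \<omega>. g (X i \<omega>)"]) (simp add: comp_def)
  have S_meas: "?Sp \<in> sets P" "?Sm \<in> sets P"
    using sum_meas[OF Dplus_meas] sum_meas[OF borel_measurable_uminus[OF Dplus_meas]]
    by measurable
  have "{\<omega>\<in>space P. \<epsilon> < \<bar>mhat n \<omega> - m\<bar>} \<subseteq> ?Sp \<union> ?Sm"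
  proof
    fix \<omega> assume "\<omega> \<in> {\<omega>\<in>space P. \<epsilon> < \<bar>mhat n \<omega> - m\<bar>}"
    then have \<omega>: "\<omega> \<in> space P" and far: "\<epsilon> < \<bar>mhat n \<omega> - m\<bar>" by auto
    have "convex_on UNIV (h (X i \<omega>))" for i
      using h_conv measurable_space[OF X_meas \<omega>] by blast
    from minimizer_far_imp_Dplus_sum_sign[OF this
        smallest_minimizer_Memp_imp_minimizer_sum[OF mhat_min[OF \<omega>] n] far]
    show "\<omega> \<in> ?Sp \<union> ?Sm" using \<omega> by (auto simp: sum_negf)
  qed
  then have "measure P {\<omega>\<in>space P. \<epsilon> < \<bar>mhat n \<omega> - m\<bar>} \<le> measure P (?Sp \<union> ?Sm)"
    using S_meas by (intro P.finite_measure_mono) auto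
  also have "\<dots> \<le> measure P ?Sp + measure P ?Sm"
    using S_meas by (rule measure_Un_le)
  finally show ?thesis .
qed

lemma prob_smallest_minimizer_far_exp_decay:
  fixes Q :: "'s measure" and P :: "'w measure"
    and h :: "'s \<Rightarrow> real \<Rightarrow> real" and X :: "nat \<Rightarrow> 'w \<Rightarrow> 's" and mhat :: "nat \<Rightarrow> 'w \<Rightarrow> real"
  assumes h_meas: "\<And>t. (\<lambda>x. h x t) \<in> borel_measurable Q"
    and h_conv: "\<And>x. x \<in> space Q \<Longrightarrow> convex_on UNIV (h x)"
    and Dplus_int: "\<And>t. integrable Q (\<lambda>x. Dplus (h x) t)"
    and P: "prob_space P"
    and X_meas: "\<And>i. X i \<in> measurable P Q"
    and X_indep: "prob_space.indep_vars P (\<lambda>_. Q) X UNIV"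
    and X_law: "\<And>i. distr P Q (X i) = Q"
    and mhat_min: "\<And>n \<omega>. n \<ge> 1 \<Longrightarrow> \<omega> \<in> space P \<Longrightarrow> smallest_minimizer (Memp h t0 X n \<omega>) (mhat n \<omega>)"
    and m_unique: "\<And>t. t \<noteq> m \<Longrightarrow> Mpop Q h t0 m < Mpop Q h t0 t"
    and B: "\<And>x. x \<noteq> 0 \<Longrightarrow> \<exists>a b. a < b \<and>
              (AE \<omega> in P. a \<le> Dplus (h (X 0 \<omega>)) (m + x) \<and> Dplus (h (X 0 \<omega>)) (m + x) \<le> b)"
    and "0 < \<epsilon>"
  shows "\<exists>c>0. \<forall>n\<ge>1. measure P {\<omega>\<in>space P. \<epsilon> < \<bar>mhat n \<omega> - m\<bar>} \<le> 2 * exp (- c * real n)"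
proof -
  note iid_decay = iid_sum_nonpos_prob_exp_decay[OF P X_meas X_indep X_law]
  note Dplus_sign = integral_Dplus_sign_at_strict_minimizer[OF h_meas h_conv Dplus_int m_unique]
  have Dplus_meas: "(\<lambda>x. Dplus (h x) t) \<in> borel_measurable Q" for t
    using Dplus_int by auto
  obtain cp where cp: "0 < cp" "\<And>n. n \<ge> 1 \<Longrightarrow>
      measure P {\<omega>\<in>space P. (\<Sum>i<n. Dplus (h (X i \<omega>)) (m + \<epsilon>)) \<le> 0} \<le> exp (- cp * real n)"
    using iid_decay[OF Dplus_meas] B[of \<epsilon>] Dplus_sign(1)[of "m + \<epsilon>"] \<open>0 < \<epsilon>\<close> by auto
  obtain cm where cm: "0 < cm" "\<And>n. n \<ge> 1 \<Longrightarrow>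
      measure P {\<omega>\<in>space P. (\<Sum>i<n. - Dplus (h (X i \<omega>)) (m - \<epsilon>)) \<le> 0} \<le> exp (- cm * real n)"
  proof -
    obtain a b where "a < b"
      and "AE \<omega> in P. a \<le> Dplus (h (X 0 \<omega>)) (m - \<epsilon>) \<and> Dplus (h (X 0 \<omega>)) (m - \<epsilon>) \<le> b"
      using B[of "- \<epsilon>"] \<open>0 < \<epsilon>\<close> by auto
    then have "- b < - a"
      and "AE \<omega> in P. - b \<le> - Dplus (h (X 0 \<omega>)) (m - \<epsilon>) \<and> - Dplus (h (X 0 \<omega>)) (m - \<epsilon>) \<le> - a"
      by (auto elim: eventually_mono)
    then have "\<exists>a b. a < b \<and> (AE \<omega> in P. a \<le> - Dplus (h (X 0 \<omega>)) (m - \<epsilon>)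
        \<and> - Dplus (h (X 0 \<omega>)) (m - \<epsilon>) \<le> b)"
      by blast
    moreover have "0 < (\<integral>x. - Dplus (h x) (m - \<epsilon>) \<partial>Q)"
      using Dplus_sign(2)[of "m - \<epsilon>"] \<open>0 < \<epsilon>\<close> by simp
    ultimately show ?thesis using iid_decay[OF borel_measurable_uminus[OF Dplus_meas]] that by blast
  qed
  show ?thesis
  proof (intro exI conjI allI impI)
    show "0 < min cp cm" using cp cm by simp
    fix n :: nat assume n: "n \<ge> 1"
    have "exp (- cp * real n) \<le> exp (- min cp cm * real n)"
      and "exp (- cm * real n) \<le> exp (- min cp cm * real n)"
      by (simp_all add: mult_right_mono)
    with prob_smallest_minimizer_far_le[where mhat = mhat and \<epsilon> = \<epsilon> and m = m,
        OF h_conv Dplus_meas P X_meas mhat_min[OF n] n]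
      cp(2)[OF n] cm(2)[OF n]
    show "measure P {\<omega>\<in>space P. \<epsilon> < \<bar>mhat n \<omega> - m\<bar>} \<le> 2 * exp (- min cp cm * real n)"
      by linarith
  qed
qed

lemma suminf_indicator_infinite_eq_top:
  fixes f :: "nat \<Rightarrow> ennreal"
  assumes "infinite S" and "\<And>n. n \<in> S \<Longrightarrow> 1 \<le> f n"
  shows "(\<Sum>n. f n * indicator S n) = \<infinity>"
proof -
  have "\<infinity> = emeasure (count_space UNIV) S"
    using assms(1) by (simp add: emeasure_count_space_infinite)
  also have "\<dots> = (\<Sum>n. indicator S n)"
    by (simp flip: nn_integral_count_space_nat)
  also have "\<dots> \<le> (\<Sum>n. f n * indicator S n)"
    using assms(2) by (intro suminf_le) (auto simp: indicator_def)
  finally show ?thesis by (simp add: top_unique)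
qed

lemma enat_powr_last_exit_le_suminf:
  fixes s :: "nat \<Rightarrow> real" and r :: real
  assumes r: "0 \<le> r"
  shows "enat_powr (last_exit s m \<epsilon>) r \<le>
    (\<Sum>n. ennreal (real n powr r) * indicator {k. 1 \<le> k \<and> \<epsilon> < \<bar>s k - m\<bar>} n)"
    (is "_ \<le> ?R")
proof -
  define S where "S = {k. 1 \<le> k \<and> \<epsilon> < \<bar>s k - m\<bar>}"
  have last_exit_eq: "last_exit s m \<epsilon> = Sup (enat ` S)"
    unfolding last_exit_def S_def by (simp add: image_Collect)
  consider "S = {}" | "finite S" "S \<noteq> {}" | "infinite S" by blast
  then show ?thesis
  proof cases
    case 1
    then show ?thesis by (simp add: last_exit_eq enat_powr_def zero_enat_def bot_enat_def)
  next
    case 2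
    then have "Max (enat ` S) \<in> enat ` S" by (intro Max_in) auto
    then obtain k where k: "k \<in> S" "Max (enat ` S) = enat k" by auto
    then have "enat_powr (last_exit s m \<epsilon>) r = (\<Sum>n\<in>{k}. ennreal (real n powr r) * indicator S n)"
      using 2 by (simp add: last_exit_eq Sup_enat_def enat_powr_def)
    also have "\<dots> \<le> ?R"
      unfolding S_def by (rule sum_le_suminf) auto
    finally show ?thesis .
  next
    case 3
    then have "last_exit s m \<epsilon> = \<infinity>"
      using finite_imageD[of enat S] by (auto simp: last_exit_eq Sup_enat_def inj_on_def)
    moreover have "?R = \<infinity>"
      unfolding S_def[symmetric] using 3 r
      by (intro suminf_indicator_infinite_eq_top) (auto simp: S_def ge_one_powr_ge_zero)
    ultimately show ?thesis by simp
  qed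
qed

lemma nn_integral_last_exit_powr_finite:
  fixes P :: "'w measure" and s :: "nat \<Rightarrow> 'w \<Rightarrow> real"
  assumes P: "finite_measure P" and r: "0 \<le> r"
    and s_meas: "\<And>n. n \<ge> 1 \<Longrightarrow> s n \<in> borel_measurable P"
    and summable: "summable (\<lambda>n. real n powr r * measure P {\<omega>\<in>space P. \<epsilon> < \<bar>s n \<omega> - m\<bar>})"
  shows "(\<integral>\<^sup>+ \<omega>. enat_powr (last_exit (\<lambda>k. s k \<omega>) m \<epsilon>) r \<partial>P) < \<infinity>"
proof -
  interpret finite_measure P by (rule P)
  define A where "A n = {\<omega>\<in>space P. 1 \<le> n \<and> \<epsilon> < \<bar>s n \<omega> - m\<bar>}" for n
  have A_meas: "A n \<in> sets P" for n
    using s_meas[of n] unfolding A_def by (cases "n \<ge> 1") auto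
  \<comment> \<open>the term \<open>n = 0\<close> vanishes on both sides, as \<open>0 powr r = 0\<close>\<close>
  have A_terms: "real n powr r * measure P (A n)
      = real n powr r * measure P {\<omega>\<in>space P. \<epsilon> < \<bar>s n \<omega> - m\<bar>}" for n
    unfolding A_def by (cases "n \<ge> 1") auto
  have "(\<integral>\<^sup>+ \<omega>. enat_powr (last_exit (\<lambda>k. s k \<omega>) m \<epsilon>) r \<partial>P)
      \<le> (\<integral>\<^sup>+ \<omega>. (\<Sum>n. ennreal (real n powr r) * indicator (A n) \<omega>) \<partial>P)"
  proof (rule nn_integral_mono)
    fix \<omega> assume "\<omega> \<in> space P"
    then have "indicator {k. 1 \<le> k \<and> \<epsilon> < \<bar>s k \<omega> - m\<bar>} n = (indicator (A n) \<omega> :: ennreal)" for n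
      unfolding A_def by (simp add: indicator_def)
    then show "enat_powr (last_exit (\<lambda>k. s k \<omega>) m \<epsilon>) r
        \<le> (\<Sum>n. ennreal (real n powr r) * indicator (A n) \<omega>)"
      using enat_powr_last_exit_le_suminf[OF r, of "\<lambda>k. s k \<omega>" m \<epsilon>] by simp
  qed
  also have "\<dots> = (\<Sum>n. ennreal (real n powr r) * emeasure P (A n))"
    using A_meas by (simp add: nn_integral_suminf nn_integral_cmult_indicator)
  also have "\<dots> = (\<Sum>n. ennreal (real n powr r * measure P (A n)))"
    by (simp add: emeasure_eq_measure ennreal_mult)
  also have "\<dots> = ennreal (\<Sum>n. real n powr r * measure P (A n))"
    using summable by (intro suminf_ennreal2) (simp_all add: A_terms)
  also have "\<dots> < \<infinity>" by simp
  finally show ?thesis .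
qed

lemma summable_real_powr_mult_exp:
  fixes r c :: real
  assumes "0 < c"
  shows "summable (\<lambda>n. real n powr r * exp (- c * real n))"
proof (rule summable_comparison_test_bigo)
  show "summable (\<lambda>n. norm (real n powr (-2)))"
    using summable_real_powr_iff[of "-2"] by simp
  show "(\<lambda>n. real n powr r * exp (- c * real n)) \<in> O(\<lambda>n. real n powr (-2))"
    using assms by real_asymp
qed

theorem corollary3:
  fixes Q :: "'s measure" and P :: "'w measure"
    and h :: "'s \<Rightarrow> real \<Rightarrow> real" and t0 m :: real
    and X :: "nat \<Rightarrow> 'w \<Rightarrow> 's" and mhat :: "nat \<Rightarrow> 'w \<Rightarrow> real"
  assumes Q: "prob_space Q"
    and h_meas: "\<And>t. (\<lambda>x. h x t) \<in> borel_measurable Q"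
    and h_conv: "\<And>x. x \<in> space Q \<Longrightarrow> convex_on UNIV (h x)"
    and Dplus_int: "\<And>t. integrable Q (\<lambda>x. Dplus (h x) t)"
    and Dminus_int: "\<And>t. integrable Q (\<lambda>x. Dminus (h x) t)"
    and P: "prob_space P"
    and X_meas: "\<And>i. X i \<in> measurable P Q"
    and X_indep: "prob_space.indep_vars P (\<lambda>_. Q) X UNIV"
    and X_law: "\<And>i. distr P Q (X i) = Q"
    and mhat_min: "\<And>n \<omega>. n \<ge> 1 \<Longrightarrow> \<omega> \<in> space P \<Longrightarrow> smallest_minimizer (Memp h t0 X n \<omega>) (mhat n \<omega>)"
    and mhat_meas: "\<And>n. n \<ge> 1 \<Longrightarrow> mhat n \<in> borel_measurable P"
    and m_unique: "\<And>t. t \<noteq> m \<Longrightarrow> Mpop Q h t0 m < Mpop Q h t0 t"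
    and B: "\<And>x. x \<noteq> 0 \<Longrightarrow> \<exists>a b. a < b \<and>
              (AE \<omega> in P. a \<le> Dplus (h (X 0 \<omega>)) (m + x) \<and> Dplus (h (X 0 \<omega>)) (m + x) \<le> b)"
  shows "\<forall>\<epsilon>>0. \<forall>r>0. (\<integral>\<^sup>+ \<omega>. enat_powr (last_exit (\<lambda>k. mhat k \<omega>) m \<epsilon>) r \<partial>P) < \<infinity>"
proof (intro allI impI)
  fix \<epsilon> r :: real assume "0 < \<epsilon>" and "0 < r"
  interpret P: prob_space P by (rule P)
  obtain c where c: "0 < c"
    and decay: "\<And>n. n \<ge> 1 \<Longrightarrow> measure P {\<omega>\<in>space P. \<epsilon> < \<bar>mhat n \<omega> - m\<bar>} \<le> 2 * exp (- c * real n)"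
    using prob_smallest_minimizer_far_exp_decay[OF h_meas h_conv Dplus_int P X_meas X_indep X_law
        mhat_min m_unique B \<open>0 < \<epsilon>\<close>] by blast
  have "summable (\<lambda>n. real n powr r * measure P {\<omega>\<in>space P. \<epsilon> < \<bar>mhat n \<omega> - m\<bar>})"
  proof (rule summable_comparison_test')
    show "summable (\<lambda>n. 2 * (real n powr r * exp (- c * real n)))"
      using summable_real_powr_mult_exp[OF c] by (rule summable_mult)
    show "norm (real n powr r * measure P {\<omega>\<in>space P. \<epsilon> < \<bar>mhat n \<omega> - m\<bar>})
        \<le> 2 * (real n powr r * exp (- c * real n))" if "1 \<le> n" for n
      using mult_left_mono[OF decay[OF that], of "real n powr r"] by simp
  qed
  with \<open>0 < r\<close> show "(\<integral>\<^sup>+ \<omega>. enat_powr (last_exit (\<lambda>k. mhat k \<omega>) m \<epsilon>) r \<partial>P) < \<infinity>"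
    by (intro nn_integral_last_exit_powr_finite[OF P.finite_measure_axioms _ mhat_meas]) auto
qed

end
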